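(* Let $\mu=\mu_1\otimes\cdots\otimes\mu_n$ be a product probability measure on $\mathbb{R}^n$, where each $\mu_k$ is a log-concave probability measure on $\mathbb{R}$ with density $g_k$ and $\mathrm{Var}(X_k)=1$ for $X_k\sim\mu_k$. Then $\Gamma(\mu)\leq 2n$.
   Context: A probability measure on $\mathbb{R}$ is log-concave if it has a density $g$ with $\ln g$ concave. $B_2^n$ is the Euclidean unit ball. $\mu^+(\partial A)=\liminf_{\epsilon\to0^+}\frac{\mu((A+\epsilon B_2^n)\setminus A)}{\epsilon}$ and $\Gamma(\mu)=\sup\{\mu^+(\partial A): A \text{ a convex body (compact convex set with nonempty interior)}\}$. *)

theory Defs
  imports "HOL-Probability.Probability"
begin

text \<open>A log-concave density on the real line: a nonnegative Borel function whose
  logarithm is concave as an extended-valued function, i.e. its positivity set is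
  convex and \<open>ln g\<close> is concave on it (\<open>ln g = -\<infinity>\<close> outside).\<close>
definition log_concave_density :: "(real \<Rightarrow> real) \<Rightarrow> bool" where
  "log_concave_density g \<longleftrightarrow>
     g \<in> borel_measurable lborel \<and> (\<forall>x. 0 \<le> g x) \<and>
     convex {x. 0 < g x} \<and> concave_on {x. 0 < g x} (\<lambda>x. ln (g x))"

definition enlarge :: "('a::real_normed_vector) set \<Rightarrow> real \<Rightarrow> 'a set" where
  "enlarge A \<epsilon> = {a + \<epsilon> *\<^sub>R b | a b. a \<in> A \<and> norm b \<le> 1}"

definition convex_body :: "('a::euclidean_space) set \<Rightarrow> bool" where
  "convex_body A \<longleftrightarrow> compact A \<and> convex A \<and> interior A \<noteq> {}"

definition surface_measure :: "'a::real_normed_vector measure \<Rightarrow> 'a set \<Rightarrow> ereal" where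
  "surface_measure \<mu> A =
     Liminf (at_right 0) (\<lambda>\<epsilon>. ereal (measure \<mu> (enlarge A \<epsilon> - A) / \<epsilon>))"

definition Gamma_conv :: "'a::euclidean_space measure \<Rightarrow> ereal" where
  "Gamma_conv \<mu> = (SUP A \<in> {A. convex_body A}. surface_measure \<mu> A)"

end

theory Submission
  imports Defs
begin

text \<open>
  A log-concave probability density \<open>g\<close> on the real line satisfies \<open>g(x\<^sub>0)\<^sup>2 Var \<le> 1\<close> at every
  point \<open>x\<^sub>0\<close>, so unit variance gives \<open>g \<le> 1\<close>. Cut \<open>g\<close> at \<open>x\<^sub>0\<close> into two half-lines with masses
  \<open>p, q\<close>, first moments \<open>A, B\<close> and second moments \<open>S, T\<close> (measured from \<open>x\<^sub>0\<close>). On a half-line,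
  \<open>g\<close> is compared with an exponential \<open>C e\<^sup>-\<^sup>l\<^sup>t\<close>: as \<open>ln g\<close> minus a linear function is concave, the
  difference changes sign at most twice, and matching two moments of the two functions
  forces \<open>g(x\<^sub>0) A \<le> p\<^sup>2\<close> and \<open>p S \<le> 2 A\<^sup>2\<close>. With \<open>p + q = 1\<close> these bounds give
  \<open>g(x\<^sub>0)\<^sup>2 (S + T - (A - B)\<^sup>2) \<le> 1\<close>.

  For the product measure, thicken a convex body \<open>A\<close> by \<open>[-\<epsilon>, \<epsilon>]\<close> in one coordinate after the
  other. Every line parallel to the new coordinate axis meets the added set in the \<open>\<epsilon>\<close>-collar of
  an interval, which has mass at most \<open>2\<epsilon>\<close> under a density bounded by 1, so by Fubini each step
  costs at most \<open>2\<epsilon>\<close>. Since \<open>A + \<epsilon> B\<^sub>2\<^sup>n\<close> lies in the fully thickened body,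
  \<open>\<mu>((A + \<epsilon> B\<^sub>2\<^sup>n) - A) \<le> 2 n \<epsilon>\<close>.
\<close>

section \<open>Integrals of functions with few sign changes\<close>

lemma integral_nonpos:
  fixes f :: "'a \<Rightarrow> real"
  assumes "\<And>x. f x \<le> 0"
  shows "integral\<^sup>L M f \<le> 0"
  using integral_nonneg_AE[of "\<lambda>x. - f x" M] assms by simp

lemma nonneg_integral_eq_0_not_pos_on_interval:
  fixes w :: "real \<Rightarrow> real"
  assumes "integrable lborel w" and "\<And>t. 0 \<le> w t" and "integral\<^sup>L lborel w = 0"
    and "a < b" and pos: "\<And>t. a < t \<Longrightarrow> t < b \<Longrightarrow> 0 < w t"
  shows False
proof -
  have "AE t in lborel. w t = 0"
    using integral_nonneg_eq_0_iff_AE assms(1-3) by auto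
  then have "AE t in lborel. indicator {a<..<b} t = (0::ennreal)"
    by eventually_elim (auto simp: indicator_def dest: pos)
  then have "emeasure lborel {a<..<b} = 0"
    using nn_integral_cong_AE by fastforce
  with \<open>a < b\<close> show False by simp
qed

lemma integral_single_crossing_le_0:
  fixes w \<psi> :: "real \<Rightarrow> real"
  assumes "integrable lborel w" and "integrable lborel (\<lambda>t. \<psi> t * w t)"
    and "integral\<^sup>L lborel w = 0" and "0 \<le> s"
    and "\<And>t. t < 0 \<Longrightarrow> w t = 0" and "\<And>t. t < s \<Longrightarrow> 0 \<le> w t" and "\<And>t. s < t \<Longrightarrow> w t \<le> 0"
    and "mono_on {0..} \<psi>"
  shows "integral\<^sup>L lborel (\<lambda>t. \<psi> t * w t) \<le> 0"
proof -
  have "(\<psi> t - \<psi> s) * w t \<le> 0" for t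
  proof -
    consider "t < 0" | "0 \<le> t" "t \<le> s" | "s < t" by linarith
    then show ?thesis
    proof cases
      case 2
      then show ?thesis using assms(4,6,8)
        by (cases "t = s") (auto intro!: mult_nonpos_nonneg simp: mono_on_def)
    next
      case 3
      then show ?thesis using assms(4,7,8)
        by (auto intro!: mult_nonneg_nonpos simp: mono_on_def)
    qed (use assms(5) in simp)
  qed
  then have "integral\<^sup>L lborel (\<lambda>t. (\<psi> t - \<psi> s) * w t) \<le> 0"
    by (rule integral_nonpos)
  also have "integral\<^sup>L lborel (\<lambda>t. (\<psi> t - \<psi> s) * w t)
      = integral\<^sup>L lborel (\<lambda>t. \<psi> t * w t) - \<psi> s * integral\<^sup>L lborel w"
    using assms(1,2) by (simp add: left_diff_distrib)
  finally show ?thesis using assms(3) by simp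
qed

lemma integral_double_crossing_le_0:
  fixes w :: "real \<Rightarrow> real"
  assumes "integrable lborel w" and "integrable lborel (\<lambda>t. t * w t)"
    and "integrable lborel (\<lambda>t. t^2 * w t)"
    and "integral\<^sup>L lborel w = 0" and "integral\<^sup>L lborel (\<lambda>t. t * w t) = 0"
    and "a \<le> b" and "\<And>t. a < t \<Longrightarrow> t < b \<Longrightarrow> 0 \<le> w t" and "\<And>t. t < a \<or> b < t \<Longrightarrow> w t \<le> 0"
  shows "integral\<^sup>L lborel (\<lambda>t. t^2 * w t) \<le> 0"
proof -
  have "(t - a) * (t - b) * w t \<le> 0" for t
  proof -
    consider "a < t" "t < b" | "t < a \<or> b < t" | "t = a \<or> t = b" by linarith
    then show ?thesis
    proof cases
      case 1
      then have "(t - a) * (t - b) \<le> 0" by (intro mult_nonneg_nonpos) auto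
      then show ?thesis using assms(7)[OF 1] by (rule mult_nonpos_nonneg)
    next
      case 2
      then have "0 \<le> (t - a) * (t - b)"
        using assms(6) by (auto intro: mult_nonpos_nonpos mult_nonneg_nonneg)
      then show ?thesis using assms(8)[OF 2] by (rule mult_nonneg_nonpos)
    qed auto
  qed
  then have "integral\<^sup>L lborel (\<lambda>t. (t - a) * (t - b) * w t) \<le> 0"
    by (rule integral_nonpos)
  also have "(\<lambda>t. (t - a) * (t - b) * w t) = (\<lambda>t. t^2 * w t - (a + b) * (t * w t) + (a * b) * w t)"
    by (auto simp: algebra_simps power2_eq_square)
  finally show ?thesis using assms(1-5) by simp
qed

lemma single_crossing_pointE:
  fixes w :: "real \<Rightarrow> real"
  assumes int: "integrable lborel w" and int0: "integral\<^sup>L lborel w = 0"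
    and zero: "\<And>t. t \<le> 0 \<Longrightarrow> w t = 0"
    and down: "\<And>x y. 0 < y \<Longrightarrow> y \<le> x \<Longrightarrow> 0 < w x \<Longrightarrow> 0 < w y"
  obtains s where "0 \<le> s" "\<And>t. t < s \<Longrightarrow> 0 \<le> w t" "\<And>t. s < t \<Longrightarrow> w t \<le> 0"
proof -
  have "\<exists>t0>0. w t0 \<le> 0"
  proof (rule ccontr)
    assume "\<not> (\<exists>t0>0. w t0 \<le> 0)"
    then have pos: "0 < w t" if "0 < t" for t
      using that by auto
    have "0 \<le> w t" for t
      using pos[of t] zero[of t] by (cases "t \<le> 0") auto
    from nonneg_integral_eq_0_not_pos_on_interval[OF int this int0, of 0 1] pos show False
      by auto
  qed
  then obtain t0 where "0 < t0" "w t0 \<le> 0" by blast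
  define P where "P = insert 0 {t. 0 < w t}"
  have "t \<le> t0" if "t \<in> P" for t
    using that \<open>0 < t0\<close> \<open>w t0 \<le> 0\<close> down[of t0 t] zero[of t] unfolding P_def by force
  then have bdd: "bdd_above P" by (rule bdd_aboveI)
  show thesis
  proof
    show "0 \<le> Sup P" using bdd by (rule cSup_upper[rotated]) (simp add: P_def)
    show "0 \<le> w t" if "t < Sup P" for t
    proof (cases "t \<le> 0")
      case False
      obtain x where "x \<in> P" "t < x"
        using \<open>t < Sup P\<close> less_cSup_iff[of P t] bdd by (auto simp: P_def)
      then show ?thesis using False down[of t x] by (auto simp: P_def)
    qed (simp add: zero)
    show "w t \<le> 0" if "Sup P < t" for t
      using that cSup_upper[OF _ bdd, of t] by (force simp: P_def)
  qed
qed

lemma is_interval_mem_if_Inf_less: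
  fixes P :: "real set"
  assumes "is_interval P" and "bdd_below P" and "Inf P < t" and "x \<in> P" and "t \<le> x"
  shows "t \<in> P"
proof -
  obtain y where "y \<in> P" "y < t"
    using assms(2-4) cInf_less_iff[of P t] by blast
  then show ?thesis
    using assms(1,4,5) unfolding is_interval_1 by (meson less_imp_le)
qed

lemma moments_eq_0_no_single_upcrossing:
  fixes w :: "real \<Rightarrow> real"
  assumes int: "integrable lborel w" "integrable lborel (\<lambda>t. t * w t)"
    and int0: "integral\<^sup>L lborel w = 0" "integral\<^sup>L lborel (\<lambda>t. t * w t) = 0"
    and below: "\<And>t. t < a \<Longrightarrow> w t \<le> 0" and above: "\<And>t. a < t \<Longrightarrow> 0 < w t"
  shows False
proof -
  have nonneg: "0 \<le> (t - a) * w t" for t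
    using below[of t] above[of t] by (cases t a rule: linorder_cases) (auto intro: mult_nonpos_nonpos)
  have "integrable lborel (\<lambda>t. (t - a) * w t)" and "integral\<^sup>L lborel (\<lambda>t. (t - a) * w t) = 0"
    using int int0 by (simp_all add: left_diff_distrib)
  from nonneg_integral_eq_0_not_pos_on_interval[OF this(1) nonneg this(2), of a "a + 1"] above
  show False by simp
qed

lemma double_crossing_pointsE:
  fixes w :: "real \<Rightarrow> real"
  assumes int: "integrable lborel w" "integrable lborel (\<lambda>t. t * w t)"
    and int0: "integral\<^sup>L lborel w = 0" "integral\<^sup>L lborel (\<lambda>t. t * w t) = 0"
    and zero: "\<And>t. t < 0 \<Longrightarrow> w t = 0" and ivl: "is_interval {t. 0 < w t}"
  obtains a b where "a \<le> b" "\<And>t. a < t \<Longrightarrow> t < b \<Longrightarrow> 0 \<le> w t" "\<And>t. t < a \<or> b < t \<Longrightarrow> w t \<le> 0"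
proof (cases "{t. 0 < w t} = {}")
  case True
  then show thesis by (intro that[of 0 0]) (auto simp: not_less)
next
  case False
  define P where "P = {t. 0 < w t}"
  have "P \<noteq> {}" using False by (simp add: P_def)
  have "0 \<le> t" if "t \<in> P" for t
    using zero[of t] that by (cases "t < 0") (auto simp: P_def)
  then have bdd_below: "bdd_below P" by (rule bdd_belowI)
  have inside: "0 < w t" if "Inf P < t" "x \<in> P" "t \<le> x" for t x
    using is_interval_mem_if_Inf_less[of P t x] ivl bdd_below that by (simp add: P_def)
  have outside_below: "w t \<le> 0" if "t < Inf P" for t
    using that cInf_lower[OF _ bdd_below, of t] by (force simp: P_def)
  have bdd_above: "bdd_above P"
  proof (rule ccontr)
    assume unbdd: "\<not> bdd_above P"
    have "0 < w t" if "Inf P < t" for t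
    proof -
      obtain x where "x \<in> P" "t < x" using unbdd by (meson bdd_above_def not_le)
      then show ?thesis using inside[of t x] that by simp
    qed
    then show False
      using moments_eq_0_no_single_upcrossing[OF int int0 outside_below] by blast
  qed
  show thesis
  proof
    show "Inf P \<le> Sup P" using \<open>P \<noteq> {}\<close> bdd_below bdd_above by (simp add: cInf_le_cSup)
    show "0 \<le> w t" if "Inf P < t" "t < Sup P" for t
    proof -
      obtain x where "x \<in> P" "t < x" using \<open>t < Sup P\<close> less_cSup_iff[OF \<open>P \<noteq> {}\<close> bdd_above] by blast
      then show ?thesis using inside[of t x] that by simp
    qed
    show "w t \<le> 0" if "t < Inf P \<or> Sup P < t" for t
    proof -
      have "t \<notin> P" if "Sup P < t" using that cSup_upper[OF _ bdd_above, of t] by fastforce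
      then show ?thesis using \<open>t < Inf P \<or> Sup P < t\<close> outside_below by (auto simp: P_def)
    qed
  qed
qed

section \<open>Log-concave densities on the real line\<close>

lemma log_concave_density_affine:
  assumes lc: "log_concave_density g"
  shows "log_concave_density (\<lambda>t. g (a + b * t))"
proof -
  have cvx: "convex {x. 0 < g x}" and cc: "concave_on {x. 0 < g x} (\<lambda>x. ln (g x))"
    using lc unfolding log_concave_density_def by auto
  have aff: "a + b * (u * x + v * y) = u * (a + b * x) + v * (a + b * y)" if "u + v = 1" for u v x y :: real
  proof -
    have "a = (u + v) * a" using that by simp
    then show ?thesis by (simp add: algebra_simps)
  qed
  have cvx': "convex {t. 0 < g (a + b * t)}"
    unfolding convex_def using convexD[OF cvx] aff by simp
  moreover have "concave_on {t. 0 < g (a + b * t)} (\<lambda>t. ln (g (a + b * t)))"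
    using cc cvx' unfolding concave_on_iff by (simp add: aff)
  moreover have "(\<lambda>t. g (a + b * t)) \<in> borel_measurable lborel" and "\<And>t. 0 \<le> g (a + b * t)"
    using lc unfolding log_concave_density_def by auto
  ultimately show ?thesis unfolding log_concave_density_def by blast
qed

lemma log_concave_density_exceeds_exp_between:
  assumes lc: "log_concave_density f" and C: "0 < C" and xyz: "x < y" "y \<le> z"
    and fx: "C * exp (d * x) \<le> f x" and fz: "C * exp (d * z) < f z"
  shows "C * exp (d * y) < f y"
proof -
  have cvx: "convex {x. 0 < f x}" and cc: "concave_on {x. 0 < f x} (\<lambda>x. ln (f x))"
    using lc unfolding log_concave_density_def by auto
  have fx0: "0 < f x" and fz0: "0 < f z"
    using fx fz C by (smt (verit) exp_gt_zero mult_pos_pos)+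
  define \<theta> where "\<theta> = (y - x) / (z - x)"
  have \<theta>: "0 < \<theta>" "\<theta> \<le> 1" using xyz by (auto simp: \<theta>_def field_simps)
  have "\<theta> * (z - x) = y - x" using xyz by (simp add: \<theta>_def)
  then have y: "y = (1 - \<theta>) * x + \<theta> * z" by (simp add: algebra_simps)
  have "y \<in> {x. 0 < f x}"
    using convexD[OF cvx, of x z "1 - \<theta>" \<theta>] fx0 fz0 \<theta> y by simp
  then have fy0: "0 < f y" by simp
  have "ln (C * exp (d * x)) \<le> ln (f x)" and "ln (C * exp (d * z)) < ln (f z)"
    using fx fz fx0 fz0 C by simp_all
  then have "(1 - \<theta>) * (ln C + d * x) + \<theta> * (ln C + d * z) < (1 - \<theta>) * ln (f x) + \<theta> * ln (f z)"
    using \<theta> C by (intro add_le_less_mono mult_left_mono mult_strict_left_mono) (auto simp: ln_mult)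
  moreover have "(1 - \<theta>) * ln (f x) + \<theta> * ln (f z) \<le> ln (f y)"
    using concave_onD[OF cc, of \<theta> x z] fx0 fz0 \<theta> y by simp
  moreover have "(1 - \<theta>) * (ln C + d * x) + \<theta> * (ln C + d * z) = ln C + d * y"
    by (subst y) (simp add: algebra_simps)
  ultimately have "ln (C * exp (d * y)) < ln (f y)"
    using C by (simp add: ln_mult)
  then show ?thesis using C fy0 by simp
qed

section \<open>Moments on the half-line\<close>

definition half_moment :: "(real \<Rightarrow> real) \<Rightarrow> nat \<Rightarrow> real" where
  "half_moment f i = (\<integral>x. indicator {0..} x * (x ^ i * f x) \<partial>lborel)"

lemma integrable_half_moment:
  fixes f :: "real \<Rightarrow> real"
  shows "integrable lborel (\<lambda>x. x ^ i * f x) \<Longrightarrow> integrable lborel (\<lambda>x. indicator {0..} x * (x ^ i * f x))"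
  using integrable_mult_indicator[of "{0..}" lborel "\<lambda>x. x ^ i * f x"] by simp

lemma half_moment_nonneg: "(\<And>x. 0 \<le> f x) \<Longrightarrow> 0 \<le> half_moment f i"
  unfolding half_moment_def by (intro integral_nonneg_AE) (auto simp: indicator_def)

lemma half_moment_eq_0_iff:
  assumes nn: "\<And>x. 0 \<le> f x" and int: "integrable lborel (\<lambda>x. x ^ i * f x)"
  shows "half_moment f i = 0 \<longleftrightarrow> (AE x in lborel. 0 < x \<longrightarrow> f x = 0)"
proof -
  have "half_moment f i = 0 \<longleftrightarrow> (AE x in lborel. indicator {0..} x * (x ^ i * f x) = 0)"
    unfolding half_moment_def using nn
    by (intro integral_nonneg_eq_0_iff_AE integrable_half_moment int) (auto simp: indicator_def)
  also have "\<dots> \<longleftrightarrow> (AE x in lborel. 0 < x \<longrightarrow> f x = 0)"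
  proof
    assume "AE x in lborel. indicator {0..} x * (x ^ i * f x) = 0"
    then show "AE x in lborel. 0 < x \<longrightarrow> f x = 0"
      by eventually_elim (auto simp: indicator_def)
  next
    assume "AE x in lborel. 0 < x \<longrightarrow> f x = 0"
    with AE_lborel_singleton[of 0] show "AE x in lborel. indicator {0..} x * (x ^ i * f x) = 0"
      by eventually_elim (auto simp: indicator_def)
  qed
  finally show ?thesis .
qed

lemma has_bochner_integral_half_moment_exp:
  fixes C l :: real
  assumes l: "0 < l" and C: "0 \<le> C"
  shows "has_bochner_integral lborel (\<lambda>x. indicator {0..} x * (x ^ i * (C * exp (- l * x))))
           (C * fact i / l ^ Suc i)"
proof (rule has_bochner_integral_nn_integral)
  show "(\<lambda>x. indicator {0..} x * (x ^ i * (C * exp (- l * x)))) \<in> borel_measurable lborel"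
    by measurable
  show "AE x in lborel. 0 \<le> indicator {0..} x * (x ^ i * (C * exp (- l * x)))"
    using C by (auto simp: indicator_def)
  have "(\<integral>\<^sup>+ x. ennreal (indicator {0..} x * (x ^ i * (C * exp (- l * x)))) \<partial>lborel)
      = (\<integral>\<^sup>+ x. ennreal (C / l) * ennreal (erlang_density 0 l x * x ^ i) \<partial>lborel)"
    using l C by (intro nn_integral_cong)
      (auto simp: erlang_density_def indicator_def ennreal_mult'[symmetric] field_simps)
  also have "\<dots> = ennreal (C / l) * ennreal (fact i / l ^ i)"
    using nn_integral_erlang_ith_moment[OF l, of 0 i] by (simp add: nn_integral_cmult)
  also have "\<dots> = ennreal (C * fact i / l ^ Suc i)"
    using l C by (simp add: ennreal_mult'[symmetric] field_simps)
  finally show "(\<integral>\<^sup>+ x. ennreal (indicator {0..} x * (x ^ i * (C * exp (- l * x)))) \<partial>lborel)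
      = ennreal (C * fact i / l ^ Suc i)" .
qed (use l C in simp)

definition exp_excess :: "(real \<Rightarrow> real) \<Rightarrow> real \<Rightarrow> real \<Rightarrow> real \<Rightarrow> real" where
  "exp_excess f C l t = indicator {0..} t * (f t - C * exp (- l * t))"

lemma exp_excess_pos_iff: "0 < exp_excess f C l t \<longleftrightarrow> 0 \<le> t \<and> C * exp (- l * t) < f t"
  by (cases "0 \<le> t") (simp_all add: exp_excess_def)

lemma exp_excess_neg: "t < 0 \<Longrightarrow> exp_excess f C l t = 0"
  by (simp add: exp_excess_def)

lemma exp_excess_moment:
  fixes f :: "real \<Rightarrow> real" and C l :: real
  assumes "0 < l" and "0 \<le> C" and int: "integrable lborel (\<lambda>x. x ^ i * f x)"
  shows "integrable lborel (\<lambda>t. t ^ i * exp_excess f C l t)"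
    and "(\<integral>t. t ^ i * exp_excess f C l t \<partial>lborel) = half_moment f i - C * fact i / l ^ Suc i"
proof -
  have exp: "has_bochner_integral lborel (\<lambda>x. indicator {0..} x * (x ^ i * (C * exp (- l * x))))
      (C * fact i / l ^ Suc i)"
    using assms(1,2) by (rule has_bochner_integral_half_moment_exp)
  have eq: "(\<lambda>t. t ^ i * exp_excess f C l t)
      = (\<lambda>x. indicator {0..} x * (x ^ i * f x) - indicator {0..} x * (x ^ i * (C * exp (- l * x))))"
    by (auto simp: exp_excess_def algebra_simps)
  show "integrable lborel (\<lambda>t. t ^ i * exp_excess f C l t)"
    unfolding eq using exp integrable_half_moment[OF int] by (simp add: has_bochner_integral_iff)
  show "(\<integral>t. t ^ i * exp_excess f C l t \<partial>lborel) = half_moment f i - C * fact i / l ^ Suc i"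
    unfolding eq half_moment_def using exp integrable_half_moment[OF int]
    by (simp add: has_bochner_integral_iff)
qed

lemma exp_excess_pos_down_closed:
  assumes "log_concave_density f" and "0 < C" and "C \<le> f 0"
    and "0 < y" and "y \<le> x" and "0 < exp_excess f C l x"
  shows "0 < exp_excess f C l y"
proof -
  have "C * exp (- l * 0) \<le> f 0" and "C * exp (- l * x) < f x"
    using assms(3,6) by (auto simp: exp_excess_pos_iff)
  then have "C * exp (- l * y) < f y"
    using log_concave_density_exceeds_exp_between[OF assms(1,2,4,5)] by blast
  then show ?thesis using \<open>0 < y\<close> by (simp add: exp_excess_pos_iff)
qed

lemma is_interval_exp_excess_pos:
  assumes lc: "log_concave_density f" and "0 < C"
  shows "is_interval {t. 0 < exp_excess f C l t}"
  unfolding is_interval_1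
proof (intro ballI allI impI)
  fix x z y assume x: "x \<in> {t. 0 < exp_excess f C l t}" and z: "z \<in> {t. 0 < exp_excess f C l t}"
    and xyz: "x \<le> y \<and> y \<le> z"
  show "y \<in> {t. 0 < exp_excess f C l t}"
  proof (cases "x = y")
    case False
    have "C * exp (- l * x) < f x" and "C * exp (- l * z) < f z"
      using x z by (simp_all add: exp_excess_pos_iff)
    then have "C * exp (- l * y) < f y"
      using log_concave_density_exceeds_exp_between[OF lc \<open>0 < C\<close>, of x y z "- l"] False xyz by simp
    then show ?thesis using x xyz by (simp add: exp_excess_pos_iff)
  qed (use x in simp)
qed

text \<open>Comparison with the exponential that has the same value at 0 and the same mass.\<close>

lemma half_moment_1_le:
  fixes f :: "real \<Rightarrow> real"
  assumes lc: "log_concave_density f" and int: "\<And>i. i \<le> 1 \<Longrightarrow> integrable lborel (\<lambda>x. x ^ i * f x)"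
  shows "f 0 * half_moment f 1 \<le> (half_moment f 0)^2"
proof -
  have nn: "\<And>x. 0 \<le> f x" using lc by (simp add: log_concave_density_def)
  define m p where "m = f 0" and "p = half_moment f 0"
  have "0 \<le> m" "0 \<le> p" using nn half_moment_nonneg by (auto simp: m_def p_def)
  then consider "m = 0" | "p = 0" | "0 < m" "0 < p" by linarith
  then show ?thesis
  proof cases
    case 2
    then have "half_moment f 1 = 0"
      using half_moment_eq_0_iff[OF nn int[of 0]] half_moment_eq_0_iff[OF nn int[of 1]] by (simp add: p_def)
    then show ?thesis by simp
  next
    case 3
    define l where "l = m / p"
    have "0 < l" using 3 by (simp add: l_def)
    define w where "w = exp_excess f m l"
    have w_int: "integrable lborel (\<lambda>t. t ^ i * w t)"
      and w_moment: "(\<integral>t. t ^ i * w t \<partial>lborel) = half_moment f i - m * fact i / l ^ Suc i"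
      if "i \<le> 1" for i
      using exp_excess_moment[OF \<open>0 < l\<close> _ int[OF that], of m] 3 by (simp_all add: w_def)
    have iw: "integrable lborel w" and w0: "integral\<^sup>L lborel w = 0"
      using w_int[of 0] w_moment[of 0] 3 by (simp_all add: l_def p_def)
    have zero: "w t = 0" if "t \<le> 0" for t
      using that by (cases "t = 0") (auto simp: w_def m_def exp_excess_def)
    have down: "0 < w y" if "0 < y" "y \<le> x" "0 < w x" for x y
      using exp_excess_pos_down_closed[OF lc \<open>0 < m\<close>, of y x l] that by (simp add: w_def m_def)
    obtain s where "0 \<le> s" "\<And>t. t < s \<Longrightarrow> 0 \<le> w t" "\<And>t. s < t \<Longrightarrow> w t \<le> 0"
      by (rule single_crossing_pointE[OF iw w0 zero down]) auto
    then have "(\<integral>t. t * w t \<partial>lborel) \<le> 0"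
      using iw w_int[of 1] w0 zero
      by (intro integral_single_crossing_le_0[of w "\<lambda>t. t" s]) (auto simp: mono_on_def)
    then have "half_moment f 1 \<le> p^2 / m"
      using w_moment[of 1] 3 by (simp add: l_def power2_eq_square)
    then show ?thesis using 3 by (simp add: m_def p_def field_simps)
  qed (simp add: m_def)
qed

text \<open>Comparison with the exponential that has the same mass and the same first moment.\<close>

lemma half_moment_2_le:
  fixes f :: "real \<Rightarrow> real"
  assumes lc: "log_concave_density f" and int: "\<And>i. i \<le> 2 \<Longrightarrow> integrable lborel (\<lambda>x. x ^ i * f x)"
  shows "half_moment f 0 * half_moment f 2 \<le> 2 * (half_moment f 1)^2"
proof -
  have nn: "\<And>x. 0 \<le> f x" using lc by (simp add: log_concave_density_def)
  define p A S where "p = half_moment f 0" and "A = half_moment f 1" and "S = half_moment f 2"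
  have "A = 0 \<longleftrightarrow> p = 0"
    using half_moment_eq_0_iff[OF nn int[of 0]] half_moment_eq_0_iff[OF nn int[of 1]] by (simp add: p_def A_def)
  moreover have "0 \<le> p" "0 \<le> A" using nn half_moment_nonneg by (auto simp: p_def A_def)
  ultimately consider "p = 0" | "0 < A" "0 < p" by linarith
  then show ?thesis
  proof cases
    case 2
    define l C where "l = p / A" and "C = p^2 / A"
    have "0 < l" "0 < C" using 2 by (simp_all add: l_def C_def)
    define w where "w = exp_excess f C l"
    have w_int: "integrable lborel (\<lambda>t. t ^ i * w t)"
      and w_moment: "(\<integral>t. t ^ i * w t \<partial>lborel) = half_moment f i - C * fact i / l ^ Suc i"
      if "i \<le> 2" for i
      using exp_excess_moment[OF \<open>0 < l\<close> _ int[OF that], of C] \<open>0 < C\<close> by (simp_all add: w_def)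
    have iw: "integrable lborel w" "integrable lborel (\<lambda>t. t * w t)" "integrable lborel (\<lambda>t. t^2 * w t)"
      using w_int[of 0] w_int[of 1] w_int[of 2] by simp_all
    have w0: "integral\<^sup>L lborel w = 0" "(\<integral>t. t * w t \<partial>lborel) = 0"
      using w_moment[of 0] w_moment[of 1] 2
      by (simp_all add: l_def C_def p_def A_def field_simps power2_eq_square)
    have zero: "w t = 0" if "t < 0" for t
      using that by (simp add: w_def exp_excess_neg)
    have ivl: "is_interval {t. 0 < w t}"
      using is_interval_exp_excess_pos[OF lc \<open>0 < C\<close>] by (simp add: w_def)
    obtain a b where "a \<le> b" "\<And>t. a < t \<Longrightarrow> t < b \<Longrightarrow> 0 \<le> w t"
        "\<And>t. t < a \<or> b < t \<Longrightarrow> w t \<le> 0"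
      by (rule double_crossing_pointsE[OF iw(1,2) w0 zero ivl]) auto
    then have "(\<integral>t. t^2 * w t \<partial>lborel) \<le> 0"
      using iw w0 by (intro integral_double_crossing_le_0)
    moreover have "C * fact 2 / l ^ Suc 2 = 2 * A^2 / p"
      using 2 by (simp add: l_def C_def field_simps power2_eq_square power3_eq_cube)
    ultimately have "S \<le> 2 * A^2 / p"
      using w_moment[of 2] by (simp add: S_def)
    then show ?thesis using 2 by (simp add: p_def A_def S_def field_simps)
  qed (simp add: p_def)
qed


section \<open>The density bound\<close>

lemma integrable_first_moment:
  fixes f :: "real \<Rightarrow> real"
  assumes "integrable lborel f" and "integrable lborel (\<lambda>x. x^2 * f x)"
  shows "integrable lborel (\<lambda>x. x * f x)"
proof (rule Bochner_Integration.integrable_bound)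
  show "integrable lborel (\<lambda>x. \<bar>f x\<bar> + \<bar>x^2 * f x\<bar>)"
    using assms by (intro Bochner_Integration.integrable_add integrable_abs)
  show "(\<lambda>x. x * f x) \<in> borel_measurable lborel"
    using borel_measurable_integrable[OF assms(1)] by measurable
  have "\<bar>x\<bar> \<le> 1 + x^2" for x :: real
  proof -
    have "0 \<le> (\<bar>x\<bar> - 1)^2" by simp
    then show ?thesis by (simp add: power2_eq_square algebra_simps abs_mult_self_eq)
  qed
  then have "\<bar>x\<bar> * \<bar>f x\<bar> \<le> (1 + x^2) * \<bar>f x\<bar>" for x
    by (rule mult_right_mono) simp
  then show "AE x in lborel. norm (x * f x) \<le> norm (\<bar>f x\<bar> + \<bar>x^2 * f x\<bar>)"
    by (simp add: abs_mult algebra_simps)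
qed

lemma integrable_moment_reflect:
  fixes f :: "real \<Rightarrow> real"
  assumes "integrable lborel (\<lambda>x. x ^ i * f x)"
  shows "integrable lborel (\<lambda>x. x ^ i * f (- x))"
proof -
  have "integrable lborel (\<lambda>x. (-1) ^ i * ((- x) ^ i * f (- x)))"
    using lborel_integrable_real_affine[OF assms, of "-1" 0] by simp
  moreover have "(-1) ^ i * ((- x) ^ i * f (- x)) = x ^ i * f (- x)" for x :: real
  proof -
    have "(- x) ^ i = (-1) ^ i * x ^ i" by (simp flip: power_mult_distrib)
    then show ?thesis by simp
  qed
  ultimately show ?thesis by simp
qed

lemma integral_moment_split:
  fixes f :: "real \<Rightarrow> real"
  assumes int: "integrable lborel (\<lambda>x. x ^ i * f x)"
  shows "(\<integral>x. x ^ i * f x \<partial>lborel) = half_moment f i + (-1) ^ i * half_moment (\<lambda>x. f (- x)) i"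
proof -
  have [measurable]: "(\<lambda>x. x ^ i * f x) \<in> borel_measurable lborel"
    using int by (rule borel_measurable_integrable)
  have "AE x in lborel. x ^ i * f x = indicator {0..} x * (x ^ i * f x) + indicator {..0} x * (x ^ i * f x)"
    using AE_lborel_singleton[of 0] by eventually_elim (auto simp: indicator_def)
  then have "(\<integral>x. x ^ i * f x \<partial>lborel)
      = (\<integral>x. indicator {0..} x * (x ^ i * f x) + indicator {..0} x * (x ^ i * f x) \<partial>lborel)"
    by (rule integral_cong_AE[rotated 2]) measurable
  also have "\<dots> = half_moment f i + (\<integral>x. indicator {..0} x * (x ^ i * f x) \<partial>lborel)"
    using integrable_half_moment[OF int] integrable_mult_indicator[of "{..0}" lborel "\<lambda>x. x ^ i * f x"] int
    by (simp add: half_moment_def)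
  also have "(\<integral>x. indicator {..0} x * (x ^ i * f x) \<partial>lborel)
      = (\<integral>x. indicator {..0} (0 + -1 * x) * ((0 + -1 * x) ^ i * f (0 + -1 * x)) \<partial>lborel)"
    using lborel_integral_real_affine[of "-1" "\<lambda>x. indicator {..0} x * (x ^ i * f x)" 0] by simp
  also have "\<dots> = (\<integral>x. (-1) ^ i * (indicator {0..} x * (x ^ i * f (- x))) \<partial>lborel)"
  proof (intro Bochner_Integration.integral_cong refl)
    fix x :: real
    have "indicator {..0} (- x) = (indicator {0..} x :: real)" by (simp add: indicator_def)
    moreover have "(- x) ^ i = (-1) ^ i * x ^ i" by (simp flip: power_mult_distrib)
    ultimately show "indicator {..0} (0 + -1 * x) * ((0 + -1 * x) ^ i * f (0 + -1 * x))
        = (-1) ^ i * (indicator {0..} x * (x ^ i * f (- x)))"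
      by (simp add: mult_ac)
  qed
  also have "\<dots> = (-1) ^ i * half_moment (\<lambda>x. f (- x)) i"
    by (simp add: half_moment_def)
  finally show ?thesis .
qed

lemma two_sided_moment_bound:
  fixes p q a b U V :: real
  assumes "0 \<le> p" "0 \<le> q" "p + q = 1"
    and "0 \<le> a" "a \<le> p^2" "p * U \<le> 2 * a^2" "a = 0 \<Longrightarrow> U = 0"
    and "0 \<le> b" "b \<le> q^2" "q * V \<le> 2 * b^2" "b = 0 \<Longrightarrow> V = 0"
  shows "U + V - (a - b)^2 \<le> 1"
proof -
  txt \<open>For \<open>p = 0\<close> both claims hold with \<open>2 / 0 = 0\<close>, since then \<open>a = 0\<close> and \<open>U = 0\<close>.\<close>
  have one_side: "U \<le> 2 * a^2 / p" "a^2 * (2 / p - 1) \<le> 2 * p^3 - p^4"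
    if p: "0 \<le> p" "p \<le> 1" and "0 \<le> a" "a \<le> p^2" "p * U \<le> 2 * a^2" "a = 0 \<Longrightarrow> U = 0"
    for p a U :: real
  proof -
    consider "p = 0" | "0 < p" using p(1) unfolding le_less by blast
    then have "U \<le> 2 * a^2 / p \<and> a^2 * (2 / p - 1) \<le> 2 * p^3 - p^4"
    proof cases
      case 2
      have "a^2 \<le> (p^2)^2" using that by (intro power_mono) auto
      then have "a^2 * (2 / p - 1) \<le> (p^2)^2 * (2 / p - 1)"
        using 2 that by (intro mult_right_mono) (auto simp: field_simps)
      also have "\<dots> = 2 * p^3 - p^4" using 2 by (simp add: field_simps power2_eq_square power3_eq_cube power4_eq_xxxx)
      finally show ?thesis using 2 that by (simp add: field_simps)
    qed (use that in simp)
    then show "U \<le> 2 * a^2 / p" "a^2 * (2 / p - 1) \<le> 2 * p^3 - p^4" by auto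
  qed
  have "p \<le> 1" "q \<le> 1" using assms by auto
  have "U + V - (a - b)^2 \<le> 2 * a^2 / p + 2 * b^2 / q - (a - b)^2"
    using one_side(1)[of p a U] one_side(1)[of q b V] assms \<open>p \<le> 1\<close> \<open>q \<le> 1\<close> by simp
  also have "\<dots> = a^2 * (2 / p - 1) + b^2 * (2 / q - 1) + 2 * (a * b)"
    by (simp add: power2_eq_square algebra_simps)
  also have "\<dots> \<le> (2 * p^3 - p^4) + (2 * q^3 - q^4) + 2 * (p^2 * q^2)"
    using one_side(2)[of p a U] one_side(2)[of q b V] assms \<open>p \<le> 1\<close> \<open>q \<le> 1\<close>
    by (intro add_mono mult_left_mono mult_mono) auto
  also have "\<dots> = 1 - 2 * p * q"
  proof -
    have q: "q = 1 - p" using assms(3) by simp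
    show ?thesis unfolding q by (simp add: algebra_simps power2_eq_square power3_eq_cube power4_eq_xxxx)
  qed
  also have "\<dots> \<le> 1" using assms by simp
  finally show ?thesis .
qed

lemma half_moment_bounds:
  fixes f :: "real \<Rightarrow> real"
  assumes lc: "log_concave_density f" and int: "\<And>i. i \<le> 2 \<Longrightarrow> integrable lborel (\<lambda>x. x ^ i * f x)"
  defines "a \<equiv> f 0 * half_moment f 1" and "U \<equiv> (f 0)^2 * half_moment f 2"
  shows "0 \<le> half_moment f 0" and "0 \<le> a" and "a \<le> (half_moment f 0)^2"
    and "half_moment f 0 * U \<le> 2 * a^2" and "a = 0 \<Longrightarrow> U = 0"
proof -
  have nn: "\<And>x. 0 \<le> f x" using lc by (simp add: log_concave_density_def)
  then show "0 \<le> half_moment f 0" and "0 \<le> a"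
    by (simp_all add: a_def half_moment_nonneg)
  show "a \<le> (half_moment f 0)^2"
    unfolding a_def using int by (intro half_moment_1_le[OF lc]) simp
  show "half_moment f 0 * U \<le> 2 * a^2"
    using mult_left_mono[OF half_moment_2_le[OF lc int] zero_le_power2[of "f 0"]]
    by (simp add: a_def U_def power_mult_distrib mult_ac)
  show "U = 0" if "a = 0"
    using that half_moment_eq_0_iff[OF nn int[of 1]] half_moment_eq_0_iff[OF nn int[of 2]]
    by (auto simp: a_def U_def)
qed

lemma log_concave_density_sq_at_0_mul_variance_le_1:
  fixes h :: "real \<Rightarrow> real"
  assumes lc: "log_concave_density h"
    and int: "integrable lborel h" "integrable lborel (\<lambda>t. t^2 * h t)"
    and mass: "integral\<^sup>L lborel h = 1"
  shows "(h 0)^2 * ((\<integral>t. t^2 * h t \<partial>lborel) - (\<integral>t. t * h t \<partial>lborel)^2) \<le> 1"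
proof -
  define h' where "h' = (\<lambda>t. h (- t))"
  have lc': "log_concave_density h'"
    using log_concave_density_affine[OF lc, of 0 "-1"] by (simp add: h'_def)
  have int_h: "integrable lborel (\<lambda>t. t ^ i * h t)" if "i \<le> 2" for i
  proof -
    have "i = 0 \<or> i = 1 \<or> i = 2" using that by auto
    then show ?thesis using int integrable_first_moment[OF int] by auto
  qed
  have int_h': "integrable lborel (\<lambda>t. t ^ i * h' t)" if "i \<le> 2" for i
    using integrable_moment_reflect[OF int_h[OF that]] by (simp add: h'_def)
  have split: "(\<integral>t. t ^ i * h t \<partial>lborel) = half_moment h i + (-1) ^ i * half_moment h' i" if "i \<le> 2" for i
    using integral_moment_split[OF int_h[OF that]] by (simp add: h'_def)
  have "half_moment h 0 + half_moment h' 0 = 1"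
    using split[of 0] mass by simp
  then have bound: "(h 0)^2 * half_moment h 2 + (h 0)^2 * half_moment h' 2
      - (h 0 * half_moment h 1 - h 0 * half_moment h' 1)^2 \<le> 1"
    using half_moment_bounds[OF lc int_h] half_moment_bounds[OF lc' int_h']
    by (intro two_sided_moment_bound) (simp_all add: h'_def)
  have mean: "(\<integral>t. t * h t \<partial>lborel) = half_moment h 1 - half_moment h' 1"
    and second: "(\<integral>t. t^2 * h t \<partial>lborel) = half_moment h 2 + half_moment h' 2"
    using split[of 1] split[of 2] by simp_all
  show ?thesis
    unfolding mean second using bound by (simp add: power2_eq_square algebra_simps)
qed

lemma integral_density_shift_moment:
  fixes g :: "real \<Rightarrow> real"
  assumes [measurable]: "g \<in> borel_measurable lborel" and nn: "\<And>x. 0 \<le> g x"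
    and int: "integrable (density lborel (\<lambda>x. ennreal (g x))) (\<lambda>x. (x - x0) ^ k)"
  shows "integrable lborel (\<lambda>t. t ^ k * g (x0 + t))"
    and "(\<integral>t. t ^ k * g (x0 + t) \<partial>lborel) = (\<integral>x. (x - x0) ^ k \<partial>density lborel (\<lambda>x. ennreal (g x)))"
proof -
  have "integrable lborel (\<lambda>x. g x * (x - x0) ^ k)"
    using int by (subst (asm) integrable_density) (auto simp: nn)
  from lborel_integrable_real_affine[OF this, of 1 x0]
  show "integrable lborel (\<lambda>t. t ^ k * g (x0 + t))" by (simp add: mult.commute)
  have "(\<integral>x. (x - x0) ^ k \<partial>density lborel (\<lambda>x. ennreal (g x))) = (\<integral>x. g x * (x - x0) ^ k \<partial>lborel)"
    by (subst integral_density) (auto simp: nn)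
  also have "\<dots> = (\<integral>t. g (x0 + 1 * t) * (x0 + 1 * t - x0) ^ k \<partial>lborel)"
    using lborel_integral_real_affine[of 1 "\<lambda>x. g x * (x - x0) ^ k" x0] by simp
  finally show "(\<integral>t. t ^ k * g (x0 + t) \<partial>lborel) = (\<integral>x. (x - x0) ^ k \<partial>density lborel (\<lambda>x. ennreal (g x)))"
    by (simp add: mult.commute)
qed

lemma (in prob_space) square_integrable_of_variance_neq_0:
  fixes X :: "'a \<Rightarrow> real"
  assumes [measurable]: "X \<in> borel_measurable M" and "variance X \<noteq> 0"
  shows "integrable M (\<lambda>x. (X x)^2)"
proof -
  let ?E = "expectation X"
  have sq: "integrable M (\<lambda>x. (X x - ?E)^2)"
    using assms(2) not_integrable_integral_eq by blast
  then have "integrable M (\<lambda>x. X x - ?E)"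
    by (rule square_integrable_imp_integrable[rotated]) measurable
  then have "integrable M (\<lambda>x. (X x - ?E)^2 + 2 * ?E * (X x - ?E) + ?E^2)"
    using sq by simp
  moreover have "(X x - ?E)^2 + 2 * ?E * (X x - ?E) + ?E^2 = (X x)^2" for x
    by (simp add: power2_eq_square algebra_simps)
  ultimately show ?thesis by simp
qed

lemma log_concave_density_sq_mul_variance_le_1:
  fixes g :: "real \<Rightarrow> real"
  assumes lc: "log_concave_density g" and prob: "prob_space (density lborel (\<lambda>x. ennreal (g x)))"
  shows "(g x0)^2 * prob_space.variance (density lborel (\<lambda>x. ennreal (g x))) (\<lambda>x. x) \<le> 1"
proof -
  define M where "M = density lborel (\<lambda>x. ennreal (g x))"
  interpret prob_space M using prob by (simp add: M_def)
  have gm [measurable]: "g \<in> borel_measurable lborel" and nn: "\<And>x. 0 \<le> g x"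
    using lc by (auto simp: log_concave_density_def)
  have [measurable_cong]: "sets M = sets borel" by (simp add: M_def)
  show ?thesis
  proof (cases "variance (\<lambda>x. x) = 0")
    case False
    have int2: "integrable M (\<lambda>x. x^2)"
      using square_integrable_of_variance_neq_0[of "\<lambda>x. x"] False by simp
    then have int1: "integrable M (\<lambda>x. x)"
      by (rule square_integrable_imp_integrable[rotated]) simp
    have int: "integrable M (\<lambda>x. (x - x0) ^ k)" if "k \<le> 2" for k
    proof -
      have "(\<lambda>x. (x - x0) ^ 2) = (\<lambda>x. x^2 - 2 * x0 * x + x0^2)"
        by (simp add: fun_eq_iff power2_eq_square algebra_simps)
      moreover have "k = 0 \<or> k = 1 \<or> k = 2" using that by auto
      ultimately show ?thesis using int1 int2 by auto
    qed
    note shift = integral_density_shift_moment[OF gm nn int[unfolded M_def]]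
    have "log_concave_density (\<lambda>t. g (x0 + t))"
      using log_concave_density_affine[OF lc, of x0 1] by simp
    then have bound: "(g x0)^2 * ((\<integral>t. t^2 * g (x0 + t) \<partial>lborel) - (\<integral>t. t * g (x0 + t) \<partial>lborel)^2) \<le> 1"
      using shift[of 0] shift[of 2] prob_space
      by (intro log_concave_density_sq_at_0_mul_variance_le_1[where h = "\<lambda>t. g (x0 + t)", simplified])
        (simp_all add: M_def)
    have "variance (\<lambda>x. x) = variance (\<lambda>x. x - x0)"
      using int1 by (simp add: prob_space)
    also have "\<dots> = (\<integral>t. t^2 * g (x0 + t) \<partial>lborel) - (\<integral>t. t * g (x0 + t) \<partial>lborel)^2"
      using variance_eq[of "\<lambda>x. x - x0"] int[of 1] int[of 2] shift(2)[of 1] shift(2)[of 2]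
      by (simp add: M_def)
    finally show ?thesis using bound by (simp add: M_def)
  qed (simp add: M_def)
qed

section \<open>Product measures with densities bounded by one\<close>

lemma measurable_vec_lambda_PiM:
  assumes "\<And>k. sets (M k) = sets borel"
  shows "(\<lambda>f. vec_lambda f :: real ^ 'n::finite) \<in> measurable (PiM UNIV M) borel"
proof -
  have "(\<lambda>f. (vec_lambda f :: real ^ 'n) \<bullet> i) \<in> borel_measurable (PiM UNIV M)" if "i \<in> Basis" for i
  proof -
    obtain k where i: "i = axis k 1" using \<open>i \<in> Basis\<close> by (auto simp: Basis_vec_def)
    have "(\<lambda>f. f k) \<in> measurable (PiM UNIV M) (M k)" by (rule measurable_component_singleton) simp
    then have "(\<lambda>f. f k) \<in> borel_measurable (PiM UNIV M)"
      using measurable_cong_sets[OF refl assms] by blast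
    then show ?thesis by (simp add: i inner_axis)
  qed
  then show ?thesis by (subst borel_measurable_euclidean_space) blast
qed

lemma emeasure_PiM_le_of_slices:
  fixes M :: "'n::finite \<Rightarrow> 'a measure"
  assumes "\<And>k. prob_space (M k)" and X: "X \<in> sets (PiM UNIV M)"
    and slice: "\<And>x. (\<integral>\<^sup>+y. indicator X (x(k := y)) \<partial>M k) \<le> r"
  shows "emeasure (PiM UNIV M) X \<le> r"
proof -
  interpret product_sigma_finite M
    unfolding product_sigma_finite_def using assms(1) by (simp add: prob_space_imp_sigma_finite)
  interpret prob_space "PiM (UNIV - {k}) M" by (rule prob_space_PiM) (use assms(1) in auto)
  have "emeasure (PiM UNIV M) X = (\<integral>\<^sup>+x. indicator X x \<partial>PiM (insert k (UNIV - {k})) M)"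
    using X by (simp add: insert_UNIV)
  also have "\<dots> = (\<integral>\<^sup>+ x. (\<integral>\<^sup>+ y. indicator X (x(k := y)) \<partial>(M k)) \<partial>(PiM (UNIV - {k}) M))"
    using X by (intro product_nn_integral_insert) (auto simp: insert_UNIV)
  also have "\<dots> \<le> (\<integral>\<^sup>+ x. r \<partial>(PiM (UNIV - {k}) M))"
    by (intro nn_integral_mono slice)
  also have "\<dots> = r" by (simp add: emeasure_space_1)
  finally show ?thesis .
qed

lemma emeasure_density_interval_le:
  fixes g :: "real \<Rightarrow> real"
  assumes "g \<in> borel_measurable lborel" and "\<And>x. g x \<le> 1" and "a \<le> b"
  shows "emeasure (density lborel (\<lambda>x. ennreal (g x))) {a..b} \<le> ennreal (b - a)"
proof -
  have "emeasure (density lborel (\<lambda>x. ennreal (g x))) {a..b} = (\<integral>\<^sup>+x. ennreal (g x) * indicator {a..b} x \<partial>lborel)"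
    using assms(1) by (subst emeasure_density) auto
  also have "\<dots> \<le> (\<integral>\<^sup>+x. indicator {a..b} x \<partial>lborel)"
    by (intro nn_integral_mono) (auto simp: indicator_def assms(2) ennreal_le_1)
  finally show ?thesis using assms(3) by simp
qed

lemma collar_of_interval_subset:
  fixes C :: "real set"
  assumes "convex C"
  shows "{y. \<exists>s\<in>C. \<bar>s - y\<bar> \<le> e} - C \<subseteq> {Inf C - e..Inf C} \<union> {Sup C..Sup C + e}"
proof
  fix y assume "y \<in> {y. \<exists>s\<in>C. \<bar>s - y\<bar> \<le> e} - C"
  then obtain s where s: "s \<in> C" "\<bar>s - y\<bar> \<le> e" and "y \<notin> C" by auto
  have between: "c \<le> y \<Longrightarrow> y \<le> d \<Longrightarrow> c \<in> C \<Longrightarrow> d \<in> C \<Longrightarrow> False" for c d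
    using \<open>convex C\<close> \<open>y \<notin> C\<close> unfolding is_interval_convex_1[symmetric] is_interval_1 by blast
  have "y \<noteq> s" using s(1) \<open>y \<notin> C\<close> by auto
  then consider "y < s" | "s < y" by (rule linorder_neqE)
  then show "y \<in> {Inf C - e..Inf C} \<union> {Sup C..Sup C + e}"
  proof cases
    case 1
    then have "y < c" if "c \<in> C" for c using between[of c s] that s(1) by force
    then have "bdd_below C" and "y \<le> Inf C"
      using s(1) by (meson bdd_belowI less_imp_le, intro cInf_greatest) (auto intro: less_imp_le)
    moreover have "Inf C \<le> s" using \<open>bdd_below C\<close> s(1) by (rule cInf_lower[rotated])
    ultimately show ?thesis using s(2) 1 by auto
  next
    case 2
    then have "c < y" if "c \<in> C" for c using between[of s c] that s(1) by force
    then have "bdd_above C" and "Sup C \<le> y"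
      using s(1) by (meson bdd_aboveI less_imp_le, intro cSup_least) (auto intro: less_imp_le)
    moreover have "s \<le> Sup C" using \<open>bdd_above C\<close> s(1) by (rule cSup_upper[rotated])
    ultimately show ?thesis using s(2) 2 by auto
  qed
qed

lemma nn_integral_indicator_collar_le:
  fixes g :: "real \<Rightarrow> real"
  assumes "g \<in> borel_measurable lborel" and "\<And>x. g x \<le> 1" and "convex C" and "0 \<le> e"
    and "X \<subseteq> {y. \<exists>s\<in>C. \<bar>s - y\<bar> \<le> e} - C"
  shows "(\<integral>\<^sup>+y. indicator X y \<partial>density lborel (\<lambda>x. ennreal (g x))) \<le> ennreal (2 * e)"
proof -
  define D where "D = density lborel (\<lambda>x. ennreal (g x))"
  have "(\<integral>\<^sup>+y. indicator X y \<partial>D) \<le> (\<integral>\<^sup>+y. indicator ({Inf C - e..Inf C} \<union> {Sup C..Sup C + e}) y \<partial>D)"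
    using collar_of_interval_subset[OF assms(3), of e] assms(5)
    by (intro nn_integral_mono indicator_leI) blast
  also have "\<dots> \<le> emeasure D {Inf C - e..Inf C} + emeasure D {Sup C..Sup C + e}"
    by (simp add: D_def emeasure_subadditive)
  also have "\<dots> \<le> ennreal e + ennreal e"
    using emeasure_density_interval_le[OF assms(1,2), of "Inf C - e" "Inf C"]
      emeasure_density_interval_le[OF assms(1,2), of "Sup C" "Sup C + e"] assms(4)
    by (intro add_mono) (simp_all add: D_def)
  finally show ?thesis using assms(4) by (simp add: D_def ennreal_plus[symmetric])
qed

definition coord_cube :: "real \<Rightarrow> 'n::finite set \<Rightarrow> (real ^ 'n) set" where
  "coord_cube e K = cbox (\<chi> j. if j \<in> K then - e else 0) (\<chi> j. if j \<in> K then e else 0)"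

definition thicken :: "(real ^ 'n::finite) set \<Rightarrow> real \<Rightarrow> 'n set \<Rightarrow> (real ^ 'n) set" where
  "thicken A e K = {a + d | a d. a \<in> A \<and> d \<in> coord_cube e K}"

lemma mem_coord_cube: "d \<in> coord_cube e K \<longleftrightarrow> (\<forall>j. \<bar>d $ j\<bar> \<le> (if j \<in> K then e else 0))"
  unfolding coord_cube_def mem_box_cart by (auto simp: abs_le_iff)

lemma compact_thicken: "compact A \<Longrightarrow> compact (thicken A e K)"
  unfolding thicken_def coord_cube_def by (intro compact_sums compact_cbox)

lemma closed_thicken: "compact A \<Longrightarrow> closed (thicken A e K)"
  by (rule compact_imp_closed[OF compact_thicken])

lemma convex_thicken:
  assumes "convex A"
  shows "convex (thicken A e K)"
proof -
  have "thicken A e K = (\<Union>a\<in>A. \<Union>d\<in>coord_cube e K. {a + d})" by (auto simp: thicken_def)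
  then show ?thesis using convex_sums[OF assms convex_box(1)] by (simp add: coord_cube_def)
qed

lemma thicken_empty: "thicken A e {} = A"
proof -
  have cube: "coord_cube e {} = {0}" by (rule set_eqI) (simp add: mem_coord_cube vec_eq_iff)
  show ?thesis unfolding thicken_def cube by (intro set_eqI) simp
qed

lemma enlarge_subset_thicken:
  assumes "0 \<le> e"
  shows "enlarge A e \<subseteq> thicken A e UNIV"
proof
  fix x assume "x \<in> enlarge A e"
  then obtain a b where x: "x = a + e *\<^sub>R b" "a \<in> A" "norm b \<le> 1" unfolding enlarge_def by auto
  have "\<bar>(e *\<^sub>R b) $ j\<bar> \<le> e" for j
  proof -
    have "\<bar>b $ j\<bar> \<le> 1" using component_le_norm_cart[of b j] x(3) by linarith
    then show ?thesis using assms by (simp add: abs_mult mult_left_le)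
  qed
  then have "e *\<^sub>R b \<in> coord_cube e UNIV" by (simp add: mem_coord_cube)
  then show "x \<in> thicken A e UNIV" unfolding thicken_def using x(1,2) by blast
qed

lemma thicken_insert_slice:
  fixes x :: "'n::finite \<Rightarrow> real"
  assumes "k \<notin> K" and "vec_lambda (x(k := y)) \<in> thicken A e (insert k K)"
  obtains s where "\<bar>s - y\<bar> \<le> e" and "vec_lambda (x(k := s)) \<in> thicken A e K"
proof -
  obtain a d where ad: "vec_lambda (x(k := y)) = a + d" "a \<in> A" "d \<in> coord_cube e (insert k K)"
    using assms(2) unfolding thicken_def by blast
  have d: "\<bar>d $ j\<bar> \<le> (if j \<in> insert k K then e else 0)" for j
    using ad(3) unfolding mem_coord_cube by blast
  define d' where "d' = (\<chi> j. if j = k then 0 else d $ j)"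
  have "d' \<in> coord_cube e K"
    unfolding mem_coord_cube
  proof
    fix j
    show "\<bar>d' $ j\<bar> \<le> (if j \<in> K then e else 0)"
      using d[of j] assms(1) by (cases "j = k") (auto simp: d'_def)
  qed
  moreover have "vec_lambda (x(k := y - d $ k)) = a + d'"
  proof (subst vec_eq_iff, intro allI)
    fix j
    have "vec_lambda (x(k := y)) $ j = (a + d) $ j" using ad(1) by simp
    then show "vec_lambda (x(k := y - d $ k)) $ j = (a + d') $ j"
      by (cases "j = k") (auto simp: d'_def)
  qed
  ultimately have "vec_lambda (x(k := y - d $ k)) \<in> thicken A e K"
    using ad(2) unfolding thicken_def by blast
  with d[of k] show thesis by (intro that[of "y - d $ k"]) simp_all
qed

lemma convex_slice:
  fixes x :: "'n::finite \<Rightarrow> real"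
  assumes "convex S"
  shows "convex {y. vec_lambda (x(k := y)) \<in> S}"
proof (rule convexI)
  fix y1 y2 u v :: real
  assume y: "y1 \<in> {y. vec_lambda (x(k := y)) \<in> S}" "y2 \<in> {y. vec_lambda (x(k := y)) \<in> S}"
    and uv: "0 \<le> u" "0 \<le> v" "u + v = 1"
  have "vec_lambda (x(k := u *\<^sub>R y1 + v *\<^sub>R y2))
      = u *\<^sub>R vec_lambda (x(k := y1)) + v *\<^sub>R vec_lambda (x(k := y2))"
  proof (subst vec_eq_iff, intro allI)
    fix j
    have "x j = (u + v) * x j" using uv(3) by simp
    then show "vec_lambda (x(k := u *\<^sub>R y1 + v *\<^sub>R y2)) $ j
        = (u *\<^sub>R vec_lambda (x(k := y1)) + v *\<^sub>R vec_lambda (x(k := y2))) $ j"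
      by (cases "j = k") (simp_all add: algebra_simps)
  qed
  then show "u *\<^sub>R y1 + v *\<^sub>R y2 \<in> {y. vec_lambda (x(k := y)) \<in> S}"
    using convexD[OF assms _ _ uv] y by simp
qed

definition vec_product_density :: "('n::finite \<Rightarrow> real \<Rightarrow> real) \<Rightarrow> (real ^ 'n) measure" where
  "vec_product_density g =
     distr (PiM UNIV (\<lambda>k. density lborel (\<lambda>x. ennreal (g k x)))) borel (\<lambda>f. vec_lambda f)"

lemma sets_vec_product_density [simp, measurable_cong]: "sets (vec_product_density g) = sets borel"
  by (simp add: vec_product_density_def)

lemma prob_space_vec_product_density:
  assumes "\<And>k. prob_space (density lborel (\<lambda>x. ennreal (g k x)))"
  shows "prob_space (vec_product_density g)"
  unfolding vec_product_density_def
  by (intro prob_space.prob_space_distr prob_space_PiM measurable_vec_lambda_PiM assms) simp_all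

lemma measure_thicken_insert_diff_le:
  fixes g :: "'n::finite \<Rightarrow> real \<Rightarrow> real"
  assumes gm: "\<And>k. g k \<in> borel_measurable lborel" and le1: "\<And>k x. g k x \<le> 1"
    and prob: "\<And>k. prob_space (density lborel (\<lambda>x. ennreal (g k x)))"
    and "k \<notin> K" and "compact A" "convex A" and "0 \<le> e"
  shows "measure (vec_product_density g) (thicken A e (insert k K) - thicken A e K) \<le> 2 * e"
proof -
  define M where "M = (\<lambda>k. density lborel (\<lambda>x. ennreal (g k x)))"
  have vm: "(\<lambda>f. vec_lambda f :: real ^ 'n) \<in> measurable (PiM UNIV M) borel"
    by (rule measurable_vec_lambda_PiM) (simp add: M_def)
  define Y where "Y = thicken A e (insert k K) - thicken A e K"
  have Y: "Y \<in> sets borel"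
    unfolding Y_def using closed_thicken[OF assms(5)] by (intro sets.Diff borel_closed)
  define X where "X = (\<lambda>f. vec_lambda f :: real ^ 'n) -` Y \<inter> space (PiM UNIV M)"
  have "emeasure (PiM UNIV M) X \<le> ennreal (2 * e)"
  proof (rule emeasure_PiM_le_of_slices[where k = k])
    show "prob_space (M k)" for k using prob by (simp add: M_def)
    show "X \<in> sets (PiM UNIV M)" unfolding X_def using vm Y by (rule measurable_sets)
    fix x :: "'n \<Rightarrow> real"
    define C where "C = {y. vec_lambda (x(k := y)) \<in> thicken A e K}"
    have "{y. x(k := y) \<in> X} \<subseteq> {y. \<exists>s\<in>C. \<bar>s - y\<bar> \<le> e} - C"
    proof
      fix y assume "y \<in> {y. x(k := y) \<in> X}"
      then have "vec_lambda (x(k := y)) \<in> thicken A e (insert k K)" and "y \<notin> C"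
        by (auto simp: X_def Y_def C_def)
      obtain s where "\<bar>s - y\<bar> \<le> e" and "vec_lambda (x(k := s)) \<in> thicken A e K"
        by (rule thicken_insert_slice[OF \<open>k \<notin> K\<close> \<open>vec_lambda (x(k := y)) \<in> thicken A e (insert k K)\<close>])
      with \<open>y \<notin> C\<close> show "y \<in> {y. \<exists>s\<in>C. \<bar>s - y\<bar> \<le> e} - C"
        unfolding C_def by blast
    qed
    moreover have "convex C"
      unfolding C_def using assms(6) by (intro convex_slice convex_thicken)
    ultimately have "(\<integral>\<^sup>+y. indicator {y. x(k := y) \<in> X} y \<partial>M k) \<le> ennreal (2 * e)"
      unfolding M_def using gm le1 assms(7) by (intro nn_integral_indicator_collar_le)
    then show "(\<integral>\<^sup>+y. indicator X (x(k := y)) \<partial>M k) \<le> ennreal (2 * e)"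
      by (simp add: indicator_def)
  qed
  then have "measure (PiM UNIV M) X \<le> 2 * e"
    using assms(7) by (simp add: measure_def enn2real_leI)
  then show ?thesis
    using measure_distr[OF vm Y] by (simp add: vec_product_density_def X_def Y_def M_def)
qed

lemma measure_thicken_diff_le:
  fixes g :: "'n::finite \<Rightarrow> real \<Rightarrow> real"
  assumes gm: "\<And>k. g k \<in> borel_measurable lborel" and le1: "\<And>k x. g k x \<le> 1"
    and prob: "\<And>k. prob_space (density lborel (\<lambda>x. ennreal (g k x)))"
    and A: "compact A" "convex A" and "0 \<le> e" and "finite K"
  shows "measure (vec_product_density g) (thicken A e K - A) \<le> 2 * e * card K"
  using \<open>finite K\<close>
proof (induction K rule: finite_induct)
  case (insert k K)
  interpret prob_space "vec_product_density g" by (rule prob_space_vec_product_density[OF prob])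
  have sets: "thicken A e J - B \<in> sets (vec_product_density g)" if "closed B" for J B
    using closed_thicken[OF A(1)] that by (simp add: borel_closed sets.Diff)
  have m1: "thicken A e K - A \<in> sets (vec_product_density g)"
    and m2: "thicken A e (insert k K) - thicken A e K \<in> sets (vec_product_density g)"
    using sets compact_imp_closed[OF A(1)] closed_thicken[OF A(1)] by auto
  have "measure (vec_product_density g) (thicken A e (insert k K) - A)
      \<le> measure (vec_product_density g) ((thicken A e K - A) \<union> (thicken A e (insert k K) - thicken A e K))"
    using m1 m2 by (intro finite_measure_mono) auto
  also have "\<dots> \<le> measure (vec_product_density g) (thicken A e K - A)
      + measure (vec_product_density g) (thicken A e (insert k K) - thicken A e K)"
    using m1 m2 by (rule measure_Un_le)
  also have "\<dots> \<le> 2 * e * card K + 2 * e"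
    using insert.IH measure_thicken_insert_diff_le[OF gm le1 prob insert.hyps(2) A \<open>0 \<le> e\<close>]
    by (rule add_mono)
  also have "\<dots> = 2 * e * card (insert k K)" using insert.hyps by (simp add: algebra_simps)
  finally show ?case .
qed (simp add: thicken_empty)

lemma measure_enlarge_diff_le:
  fixes g :: "'n::finite \<Rightarrow> real \<Rightarrow> real"
  assumes gm: "\<And>k. g k \<in> borel_measurable lborel" and le1: "\<And>k x. g k x \<le> 1"
    and prob: "\<And>k. prob_space (density lborel (\<lambda>x. ennreal (g k x)))"
    and A: "compact A" "convex A" and "0 \<le> e"
  shows "measure (vec_product_density g) (enlarge A e - A) \<le> 2 * real CARD('n) * e"
proof -
  interpret prob_space "vec_product_density g" by (rule prob_space_vec_product_density[OF prob])
  have "measure (vec_product_density g) (enlarge A e - A) \<le> measure (vec_product_density g) (thicken A e UNIV - A)"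
    using enlarge_subset_thicken[OF \<open>0 \<le> e\<close>, of A] closed_thicken[OF A(1)] compact_imp_closed[OF A(1)]
    by (intro finite_measure_mono) (auto simp: borel_closed sets.Diff)
  also have "\<dots> \<le> 2 * e * CARD('n)"
    using measure_thicken_diff_le[OF gm le1 prob A \<open>0 \<le> e\<close>] by simp
  finally show ?thesis by (simp add: mult_ac)
qed

lemma surface_measure_le_of_enlarge_bound:
  assumes "\<And>e. 0 < e \<Longrightarrow> measure \<mu> (enlarge A e - A) \<le> c * e"
  shows "surface_measure \<mu> A \<le> ereal c"
proof -
  have "eventually (\<lambda>e. ereal (measure \<mu> (enlarge A e - A) / e) \<le> ereal c) (at_right 0)"
    unfolding eventually_at_right_field using assms by (intro exI[of _ 1]) (auto simp: divide_le_eq)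
  then have "Limsup (at_right 0) (\<lambda>e. ereal (measure \<mu> (enlarge A e - A) / e)) \<le> ereal c"
    by (rule Limsup_bounded)
  moreover have "surface_measure \<mu> A \<le> Limsup (at_right 0) (\<lambda>e. ereal (measure \<mu> (enlarge A e - A) / e))"
    unfolding surface_measure_def by (rule Liminf_le_Limsup) simp
  ultimately show ?thesis by simp
qed

theorem corollary5p11:
  fixes g :: "'n::finite \<Rightarrow> real \<Rightarrow> real"
    and \<mu> :: "(real ^ 'n) measure"
  assumes logconc: "\<And>k. log_concave_density (g k)"
    and prob: "\<And>k. prob_space (density lborel (\<lambda>x. ennreal (g k x)))"
    and var: "\<And>k. prob_space.variance (density lborel (\<lambda>x. ennreal (g k x))) (\<lambda>x. x) = 1"
    and mu: "\<mu> = distr (PiM UNIV (\<lambda>k. density lborel (\<lambda>x. ennreal (g k x)))) borel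
                  (\<lambda>f. vec_lambda f)"
  shows "Gamma_conv \<mu> \<le> ereal (2 * real CARD('n))"
proof -
  have gm: "\<And>k. g k \<in> borel_measurable lborel"
    using logconc by (simp add: log_concave_density_def)
  have le1: "g k x \<le> 1" for k x
    using log_concave_density_sq_mul_variance_le_1[OF logconc prob, of k x] var[of k]
    by (simp add: abs_square_le_1)
  have "surface_measure \<mu> A \<le> ereal (2 * real CARD('n))" if "convex_body A" for A
  proof (rule surface_measure_le_of_enlarge_bound)
    fix e :: real assume "0 < e"
    with that show "measure \<mu> (enlarge A e - A) \<le> 2 * real CARD('n) * e"
      unfolding mu convex_body_def vec_product_density_def[symmetric]
      by (intro measure_enlarge_diff_le[OF gm le1 prob]) auto
  qed
  then show ?thesis unfolding Gamma_conv_def by (intro SUP_least) auto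
qed

end
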